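(* Let $\mathcal{A}$ be a complex subspace arrangement in $\mathbb{C}^l$ and $x_0\in\mathcal{A}$. Let $\mathcal{A}'=\mathcal{A}\setminus\{x_0\}$, $\widetilde{\mathcal{A}''}=\{x_0\cap y\mid y\in\mathcal{A}'\}$ (a finite set of linear subspaces of $x_0$), and let $\mathcal{A}''\subseteq\widetilde{\mathcal{A}''}$ be the set of those elements of $\widetilde{\mathcal{A}''}$ that are not properly contained in another element of $\widetilde{\mathcal{A}''}$. Fix any linear order on $\widetilde{\mathcal{A}''}$ and give $\mathcal{A}''$ the induced order. Then the natural inclusion $D(\mathcal{A}'')\hookrightarrow D(\widetilde{\mathcal{A}''})$ (both complexes formed with ambient space $W=x_0$) is a quasi-isomorphism.
   Context: A (complex) subspace arrangement in $\mathbb{C}^l$ is a finite set $\mathcal{A}$ of complex linear subspaces of $\mathbb{C}^l$ such that there are no distinct $x,y\in\mathcal{A}$ with $x\subset y$. For a finite set $\mathcal{C}$ of linear subspaces of a complex vector space $W$, equipped with a linear order, $D(\mathcal{C})$ denotes the cochain complex over $\mathbb{Q}$ with basis all subsets $\sigma\subseteq\mathcal{C}$, where, writing $\vee\sigma=\bigcap_{x\in\sigma}x$ (with $\vee\emptyset=W$), $\deg\sigma=2\operatorname{codim}_W(\vee\sigma)-|\sigma|$, and for $\sigma=\{x_{i_1},\dots,x_{i_r}\}$ listed in increasing order, $d\sigma=\sum_{j:\vee(\sigma\setminus\{x_{i_j}\})=\vee\sigma}(-1)^j(\sigma\setminus\{x_{i_j}\})$. For $\mathcal{C}'\subseteq\mathcal{C}$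 with induced order, $D(\mathcal{C}')$ is the subcomplex of $D(\mathcal{C})$ spanned by subsets of $\mathcal{C}'$. *)

theory Defs
  imports "HOL-Analysis.Analysis"
begin

text \<open>Vectors of C^l are modelled as the type complex ^ 'n (l = CARD('n)).
  Complex linear subspaces are sets S with vec.subspace S, dimension vec.dim
  (complex-linear notions, scalar multiplication (*s)).\<close>


definition subspace_arrangement :: "(complex ^ ('n::finite)) set set \<Rightarrow> bool" where
  "subspace_arrangement A \<longleftrightarrow> finite A \<and> (\<forall>x\<in>A. vec.subspace x)
     \<and> (\<forall>x\<in>A. \<forall>y\<in>A. x \<noteq> y \<longrightarrow> \<not> x \<subseteq> y)"

text \<open>Join of sigma: intersection of the members, intersected with the ambient space W
  (so the empty join is W).\<close>
definition join :: "(complex ^ ('n::finite)) set \<Rightarrow> (complex ^ ('n::finite)) set set \<Rightarrow> (complex ^ ('n::finite)) set" where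
  "join W \<sigma> = W \<inter> \<Inter>\<sigma>"

definition cdeg :: "(complex ^ ('n::finite)) set \<Rightarrow> (complex ^ ('n::finite)) set set \<Rightarrow> int" where
  "cdeg W \<sigma> = 2 * (int (vec.dim W) - int (vec.dim (join W \<sigma>))) - int (card \<sigma>)"

text \<open>Sign (-1)^j where j is the (1-based) position of x in sigma w.r.t. the order r.\<close>
definition csign :: "((complex ^ ('n::finite)) set \<times> (complex ^ ('n::finite)) set) set \<Rightarrow> (complex ^ ('n::finite)) set set \<Rightarrow> (complex ^ ('n::finite)) set \<Rightarrow> rat" where
  "csign r \<sigma> x = (-1) ^ Suc (card {y \<in> \<sigma>. (y, x) \<in> r \<and> y \<noteq> x})"

text \<open>Cochains of D(C) are rational coefficient functions on subsets of C;
  a homogeneous cochain of degree k is supported on subsets of C of degree k.\<close>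
definition cochain :: "(complex ^ ('n::finite)) set \<Rightarrow> (complex ^ ('n::finite)) set set \<Rightarrow> int \<Rightarrow> ((complex ^ ('n::finite)) set set \<Rightarrow> rat) \<Rightarrow> bool" where
  "cochain W C k c \<longleftrightarrow> (\<forall>\<sigma>. c \<sigma> \<noteq> 0 \<longrightarrow> \<sigma> \<subseteq> C \<and> cdeg W \<sigma> = k)"

text \<open>This is the linear extension of the basis formula
  d sigma = sum_j (-1)^j (sigma - x_{i_j}).  On cochains supported on subsets of
  C' \<subseteq> C it agrees with the differential of the subcomplex D(C').\<close>
definition cdiff :: "(complex ^ ('n::finite)) set \<Rightarrow> (complex ^ ('n::finite)) set set \<Rightarrow> ((complex ^ ('n::finite)) set \<times> (complex ^ ('n::finite)) set) set
    \<Rightarrow> ((complex ^ ('n::finite)) set set \<Rightarrow> rat) \<Rightarrow> ((complex ^ ('n::finite)) set set \<Rightarrow> rat)" where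
  "cdiff W C r c = (\<lambda>\<tau>. \<Sum>x \<in> C - \<tau>.
      if join W \<tau> = join W (insert x \<tau>) then csign r (insert x \<tau>) x * c (insert x \<tau>) else 0)"

text \<open>The inclusion D(C') into D(C) (C' \<subseteq> C, induced order) is a quasi-isomorphism:
  for every degree k the induced map on cohomology H^k is injective and surjective,
  written out on representatives.\<close>
definition incl_quasi_iso :: "(complex ^ ('n::finite)) set \<Rightarrow> (complex ^ ('n::finite)) set set \<Rightarrow> (complex ^ ('n::finite)) set set
    \<Rightarrow> ((complex ^ ('n::finite)) set \<times> (complex ^ ('n::finite)) set) set \<Rightarrow> bool" where
  "incl_quasi_iso W C' C r \<longleftrightarrow>
     (\<forall>k c. cochain W C' k c \<and> cdiff W C r c = (\<lambda>_. 0)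
            \<and> (\<exists>b. cochain W C (k - 1) b \<and> cdiff W C r b = c)
          \<longrightarrow> (\<exists>b. cochain W C' (k - 1) b \<and> cdiff W C r b = c))
   \<and> (\<forall>k c. cochain W C k c \<and> cdiff W C r c = (\<lambda>_. 0)
          \<longrightarrow> (\<exists>c' b. cochain W C' k c' \<and> cdiff W C r c' = (\<lambda>_. 0)
                  \<and> cochain W C (k - 1) b \<and> c = (\<lambda>\<sigma>. c' \<sigma> + cdiff W C r b \<sigma>)))"

end

theory Submission
  imports Defs
begin

text \<open>If x \<subset> y are both in C, then every simplex \<tau> containing x has the same join as
  \<tau> \<union> {y}. Adding or removing y is therefore a contracting homotopy h on the part of
  D(C) spanned by simplices containing x, so the chain map \<rho> = id - (dh + hd) is homotopic
  to the identity and lands in D(C - {x}); hence D(C - {x}) \<hookrightarrow> D(C) is a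
  quasi-isomorphism. Every non-maximal element of the intersection arrangement lies
  properly in a maximal one, so removing the non-maximal elements one at a time gives
  the theorem.\<close>

definition order_sign :: "('a \<times> 'a) set \<Rightarrow> 'a \<Rightarrow> 'a \<Rightarrow> rat" where
  "order_sign r a b = (if (a, b) \<in> r then -1 else 1)"

lemma order_sign_swap:
  assumes "total_on C r" "antisym r" "a \<in> C" "b \<in> C" "a \<noteq> b"
  shows "order_sign r b a = - order_sign r a b"
proof -
  have "(a, b) \<in> r \<longleftrightarrow> (b, a) \<notin> r"
    using assms unfolding total_on_def antisym_def by blast
  then show ?thesis unfolding order_sign_def by auto
qed

lemma order_sign_square: "order_sign r a b * order_sign r a b = 1"
  by (simp add: order_sign_def)

lemma csign_insert_self: "csign r (insert a S) a = csign r S a"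
proof -
  have "{y \<in> insert a S. (y, a) \<in> r \<and> y \<noteq> a} = {y \<in> S. (y, a) \<in> r \<and> y \<noteq> a}" by auto
  then show ?thesis by (simp add: csign_def)
qed

lemma csign_insert:
  assumes "finite S" "a \<notin> S" "a \<noteq> b"
  shows "csign r (insert a S) b = order_sign r a b * csign r S b"
proof (cases "(a, b) \<in> r")
  case True
  then have "{y \<in> insert a S. (y, b) \<in> r \<and> y \<noteq> b} = insert a {y \<in> S. (y, b) \<in> r \<and> y \<noteq> b}"
    using assms by auto
  with True assms show ?thesis by (simp add: csign_def order_sign_def)
next
  case False
  then have "{y \<in> insert a S. (y, b) \<in> r \<and> y \<noteq> b} = {y \<in> S. (y, b) \<in> r \<and> y \<noteq> b}"
    using assms by auto
  with False show ?thesis by (simp add: csign_def order_sign_def)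
qed

lemma csign_square: "csign r S a * csign r S a = 1"
proof -
  have "((-1::rat) ^ k) * (-1) ^ k = 1" for k
    by (induct k) auto
  then show ?thesis unfolding csign_def .
qed

lemma csign_insert_twice_swap:
  assumes "finite S" "total_on C r" "antisym r" "a \<in> C" "b \<in> C" "a \<noteq> b" "a \<notin> S" "b \<notin> S"
  shows "csign r (insert b S) b * csign r (insert a (insert b S)) a
       = - (csign r (insert a S) a * csign r (insert b (insert a S)) b)"
proof -
  have "csign r (insert a (insert b S)) a = order_sign r b a * csign r S a"
    using csign_insert_self[of r a "insert b S"] csign_insert[OF assms(1), of b a r] assms(6,8) by simp
  moreover have "csign r (insert b (insert a S)) b = order_sign r a b * csign r S b"
    using csign_insert_self[of r b "insert a S"] csign_insert[OF assms(1), of a b r] assms(6,7) by simp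
  moreover have "order_sign r b a = - order_sign r a b"
    using order_sign_swap[OF assms(2-6)] .
  ultimately show ?thesis by (simp add: csign_insert_self)
qed

lemma csign_insert_twice_cancel:
  assumes "finite S" "total_on C r" "antisym r" "y \<in> C" "z \<in> C" "y \<noteq> z" "y \<notin> S" "z \<notin> S"
  shows "csign r (insert z (insert y S)) z * csign r (insert z (insert y S)) y
       = - (csign r (insert y S) y * csign r (insert z S) z)"
proof -
  have "csign r (insert z (insert y S)) z = order_sign r y z * csign r S z"
    using csign_insert_self[of r z "insert y S"] csign_insert[OF assms(1), of y z r] assms(6,7) by simp
  moreover have "csign r (insert z (insert y S)) y = order_sign r z y * csign r S y"
    using csign_insert[of "insert y S" z y r] csign_insert_self[of r y S] assms(1,6,8) by simp
  moreover have "order_sign r z y = - order_sign r y z"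
    using order_sign_swap[OF assms(2-6)] .
  ultimately show ?thesis by (simp add: csign_insert_self algebra_simps order_sign_square)
qed

lemma join_insert_subset: "join W (insert a S) \<subseteq> join W S"
  by (auto simp: join_def)

lemma join_insert_absorb: "x \<in> S \<Longrightarrow> x \<subseteq> y \<Longrightarrow> join W (insert y S) = join W S"
  by (auto simp: join_def)

lemma cdeg_insert:
  "finite S \<Longrightarrow> a \<notin> S \<Longrightarrow> join W (insert a S) = join W S \<Longrightarrow> cdeg W (insert a S) = cdeg W S - 1"
  by (simp add: cdeg_def)

lemma sum_offdiagonal_antisym_eq_0:
  fixes g :: "'a \<Rightarrow> 'a \<Rightarrow> 'b::linordered_ab_group_add"
  assumes "finite A" "\<And>a b. a \<in> A \<Longrightarrow> b \<in> A \<Longrightarrow> a \<noteq> b \<Longrightarrow> g b a = - g a b"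
  shows "(\<Sum>a\<in>A. \<Sum>b\<in>A - {a}. g a b) = 0"
proof -
  define P where "P = (SIGMA a:A. A - {a})"
  have "(\<Sum>(a, b)\<in>P. g a b) = (\<Sum>(a, b)\<in>P. g b a)"
    by (rule sum.reindex_bij_witness[of _ prod.swap prod.swap]) (auto simp: P_def)
  also have "\<dots> = - (\<Sum>(a, b)\<in>P. g a b)"
    using assms(2) by (force simp: sum_negf[symmetric] P_def intro!: sum.cong)
  finally have "(\<Sum>(a, b)\<in>P. g a b) = 0" by simp
  then show ?thesis
    unfolding P_def using assms(1) by (simp add: sum.Sigma)
qed

lemma cdiff_add: "cdiff W C r (\<lambda>\<sigma>. f \<sigma> + g \<sigma>) = (\<lambda>\<tau>. cdiff W C r f \<tau> + cdiff W C r g \<tau>)"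
  unfolding cdiff_def by (rule ext) (simp add: sum.distrib[symmetric], intro sum.cong, auto simp: distrib_left)

lemma cdiff_diff: "cdiff W C r (\<lambda>\<sigma>. f \<sigma> - g \<sigma>) = (\<lambda>\<tau>. cdiff W C r f \<tau> - cdiff W C r g \<tau>)"
  unfolding cdiff_def
  by (rule ext) (simp add: sum_subtractf[symmetric] right_diff_distrib if_distrib cong: if_cong)

lemma cdiff_zero [simp]: "cdiff W C r (\<lambda>_. 0) = (\<lambda>_. 0)"
  unfolding cdiff_def by (rule ext) (auto intro!: sum.neutral)

lemma cdiff_eq_0_outside:
  assumes "\<And>\<sigma>. c \<sigma> \<noteq> 0 \<Longrightarrow> \<sigma> \<subseteq> C" "\<not> \<tau> \<subseteq> C"
  shows "cdiff W C r c \<tau> = 0"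
  unfolding cdiff_def using assms by (intro sum.neutral) auto

lemma cdiff_superset:
  assumes "finite D" "C \<subseteq> D" "\<And>\<sigma>. c \<sigma> \<noteq> 0 \<Longrightarrow> \<sigma> \<subseteq> C"
  shows "cdiff W D r c = cdiff W C r c"
  unfolding cdiff_def
proof (rule ext, rule sum.mono_neutral_right)
  fix \<tau>
  show "finite (D - \<tau>)" "C - \<tau> \<subseteq> D - \<tau>" using assms(1,2) by auto
  show "\<forall>x\<in>(D - \<tau>) - (C - \<tau>). (if join W \<tau> = join W (insert x \<tau>)
      then csign r (insert x \<tau>) x * c (insert x \<tau>) else 0) = 0"
    using assms(3) by auto
qed

lemma cdiff_cdiff:
  assumes fin: "finite C" and total: "total_on C r" "antisym r"
    and supp: "\<And>\<sigma>. c \<sigma> \<noteq> 0 \<Longrightarrow> \<sigma> \<subseteq> C"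
  shows "cdiff W C r (cdiff W C r c) = (\<lambda>_. 0)"
proof
  fix \<tau>
  define g where "g a b = (if join W \<tau> = join W (insert b (insert a \<tau>))
     then csign r (insert a \<tau>) a * csign r (insert b (insert a \<tau>)) b * c (insert b (insert a \<tau>))
     else 0)" for a b
  have "cdiff W C r (cdiff W C r c) \<tau> = (\<Sum>a\<in>C - \<tau>. \<Sum>b\<in>C - \<tau> - {a}. g a b)"
    unfolding cdiff_def
  proof (rule sum.cong[OF refl])
    fix a assume "a \<in> C - \<tau>"
    have C_minus: "C - insert a \<tau> = C - \<tau> - {a}" by auto
    show "(if join W \<tau> = join W (insert a \<tau>)
         then csign r (insert a \<tau>) a *
              (\<Sum>x\<in>C - insert a \<tau>.
                  if join W (insert a \<tau>) = join W (insert x (insert a \<tau>))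
                  then csign r (insert x (insert a \<tau>)) x * c (insert x (insert a \<tau>)) else 0)
         else 0) = (\<Sum>b\<in>C - \<tau> - {a}. g a b)"
    proof (cases "join W \<tau> = join W (insert a \<tau>)")
      case True
      show ?thesis unfolding C_minus sum_distrib_left if_P[OF True]
        by (intro sum.cong refl) (auto simp: g_def True)
    next
      case False
      have "join W \<tau> \<noteq> join W (insert b (insert a \<tau>))" for b
        using False join_insert_subset[of W a \<tau>] join_insert_subset[of W b "insert a \<tau>"] by blast
      then show ?thesis using False by (simp add: g_def)
    qed
  qed
  also have "\<dots> = 0"
  proof (rule sum_offdiagonal_antisym_eq_0)
    fix a b assume ab: "a \<in> C - \<tau>" "b \<in> C - \<tau>" "a \<noteq> b"
    show "g b a = - g a b"
    proof (cases "finite \<tau>")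
      case True
      have "insert a (insert b \<tau>) = insert b (insert a \<tau>)" by auto
      then show ?thesis
        using csign_insert_twice_swap[OF True total, of a b] ab unfolding g_def by auto
    next
      case False
      then have "\<not> insert b (insert a \<tau>) \<subseteq> C" "\<not> insert a (insert b \<tau>) \<subseteq> C"
        using fin by (meson finite_insert finite_subset)+
      then have "c (insert b (insert a \<tau>)) = 0" "c (insert a (insert b \<tau>)) = 0"
        using supp by blast+
      then show ?thesis by (simp add: g_def)
    qed
  qed (use fin in simp)
  finally show "cdiff W C r (cdiff W C r c) \<tau> = 0" .
qed

lemma cochain_support: "cochain W C k c \<Longrightarrow> c \<sigma> \<noteq> 0 \<Longrightarrow> \<sigma> \<subseteq> C"
  unfolding cochain_def by blast

lemma cochain_mono: "C \<subseteq> D \<Longrightarrow> cochain W C k c \<Longrightarrow> cochain W D k c"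
  unfolding cochain_def by blast

lemma cochain_add:
  "cochain W C k a \<Longrightarrow> cochain W C k b \<Longrightarrow> cochain W C k (\<lambda>\<sigma>. a \<sigma> + b \<sigma>)"
  unfolding cochain_def by (metis add_cancel_right_left)

lemma cochain_cdiff:
  assumes "finite C" "cochain W C k c"
  shows "cochain W C (k + 1) (cdiff W D r c)"
  unfolding cochain_def
proof (intro allI impI)
  fix \<tau> assume "cdiff W D r c \<tau> \<noteq> 0"
  then obtain z where z: "z \<in> D - \<tau>" and J: "join W \<tau> = join W (insert z \<tau>)"
    and cz: "c (insert z \<tau>) \<noteq> 0"
    unfolding cdiff_def by (auto elim!: sum.not_neutral_contains_not_neutral split: if_splits)
  have sub: "insert z \<tau> \<subseteq> C" and deg: "cdeg W (insert z \<tau>) = k"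
    using assms(2) cz unfolding cochain_def by blast+
  have "finite \<tau>" using finite_subset[OF sub assms(1)] by simp
  then have "cdeg W (insert z \<tau>) = cdeg W \<tau> - 1" using cdeg_insert[of \<tau> z W] J z by simp
  then show "\<tau> \<subseteq> C \<and> cdeg W \<tau> = k + 1" using sub deg by simp
qed

type_synonym 'n subspace = "(complex ^ 'n) set"

text \<open>Coefficient form of the map \<sigma> \<mapsto> \<plusminus>(\<sigma> \<union> {y}) on simplices \<sigma> that contain x but not y.\<close>
definition cone_homotopy :: "'n::finite subspace \<Rightarrow> 'n subspace \<Rightarrow> ('n subspace \<times> 'n subspace) set
    \<Rightarrow> ('n subspace set \<Rightarrow> rat) \<Rightarrow> ('n subspace set \<Rightarrow> rat)" where
  "cone_homotopy x y r c = (\<lambda>\<tau>. if x \<in> \<tau> \<and> y \<in> \<tau> then csign r \<tau> y * c (\<tau> - {y}) else 0)"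

lemma cone_homotopy_support:
  assumes "y \<in> C" "\<And>\<sigma>. c \<sigma> \<noteq> 0 \<Longrightarrow> \<sigma> \<subseteq> C" "cone_homotopy x y r c \<tau> \<noteq> 0"
  shows "\<tau> \<subseteq> C"
proof -
  have "y \<in> \<tau>" "c (\<tau> - {y}) \<noteq> 0"
    using assms(3) by (auto simp: cone_homotopy_def split: if_splits)
  then show ?thesis using assms(1,2) by blast
qed

lemma cone_homotopy_eq_0:
  assumes "x \<noteq> y" "\<And>\<sigma>. x \<in> \<sigma> \<Longrightarrow> c \<sigma> = 0"
  shows "cone_homotopy x y r c = (\<lambda>_. 0)"
proof
  fix \<tau>
  have "x \<in> \<tau> \<Longrightarrow> x \<in> \<tau> - {y}" using assms(1) by blast
  then show "cone_homotopy x y r c \<tau> = 0" using assms(2) by (simp add: cone_homotopy_def)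
qed

lemma cone_homotopy_zero [simp]: "cone_homotopy x y r (\<lambda>_. 0) = (\<lambda>_. 0)"
  by (simp add: cone_homotopy_def fun_eq_iff)

lemma cochain_cone_homotopy:
  assumes "finite C" "y \<in> C" "x \<subset> y" "cochain W C k c"
  shows "cochain W C (k - 1) (cone_homotopy x y r c)"
  unfolding cochain_def
proof (intro allI impI)
  fix \<tau> assume "cone_homotopy x y r c \<tau> \<noteq> 0"
  then have xy: "x \<in> \<tau>" "y \<in> \<tau>" and cz: "c (\<tau> - {y}) \<noteq> 0"
    by (auto simp: cone_homotopy_def split: if_splits)
  have sub: "\<tau> - {y} \<subseteq> C" and deg: "cdeg W (\<tau> - {y}) = k"
    using assms(4)[unfolded cochain_def, rule_format, OF cz] by blast+
  have "x \<in> \<tau> - {y}" using xy less_imp_neq[OF assms(3)] by blast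
  then have "join W (insert y (\<tau> - {y})) = join W (\<tau> - {y})"
    using psubset_imp_subset[OF assms(3)] by (rule join_insert_absorb)
  then have "cdeg W (insert y (\<tau> - {y})) = cdeg W (\<tau> - {y}) - 1"
    using finite_subset[OF sub assms(1)] by (intro cdeg_insert) simp_all
  moreover have "insert y (\<tau> - {y}) = \<tau>" using xy by blast
  ultimately show "\<tau> \<subseteq> C \<and> cdeg W \<tau> = k - 1" using sub deg assms(2) xy by force
qed

lemma homotopy_formula_apex_notin:
  assumes "finite C" "y \<in> C" "x \<in> \<tau>" "y \<notin> \<tau>" "x \<subseteq> y"
  shows "cdiff W C r (cone_homotopy x y r c) \<tau> = c \<tau>"
proof -
  let ?term = "\<lambda>z. if join W \<tau> = join W (insert z \<tau>)
    then csign r (insert z \<tau>) z * cone_homotopy x y r c (insert z \<tau>) else 0"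
  have "cdiff W C r (cone_homotopy x y r c) \<tau> = ?term y + (\<Sum>z\<in>C - \<tau> - {y}. ?term z)"
    unfolding cdiff_def using assms(1,2,4) by (simp add: sum.remove)
  also have "(\<Sum>z\<in>C - \<tau> - {y}. ?term z) = 0"
    using assms(4) by (intro sum.neutral) (auto simp: cone_homotopy_def)
  also have "?term y = csign r (insert y \<tau>) y * csign r (insert y \<tau>) y * c \<tau>"
    using join_insert_absorb[OF assms(3,5)] assms(3,4) by (simp add: cone_homotopy_def)
  finally show ?thesis by (simp add: csign_square)
qed

lemma homotopy_formula_apex_in:
  assumes fin: "finite C" and total: "total_on C r" "antisym r"
    and xy: "y \<in> C" "x \<subset> y" and \<tau>: "finite \<tau>" "x \<in> \<tau>" "y \<in> \<tau>"
  shows "cdiff W C r (cone_homotopy x y r c) \<tau> + cone_homotopy x y r (cdiff W C r c) \<tau> = c \<tau>"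
proof -
  define \<sigma> where "\<sigma> = \<tau> - {y}"
  have \<sigma>: "\<tau> = insert y \<sigma>" "y \<notin> \<sigma>" "x \<in> \<sigma>" "finite \<sigma>"
    using \<tau> xy(2) by (auto simp: \<sigma>_def)
  define A where "A = C - \<tau>"
  have A: "finite A" "y \<notin> A" "C - \<sigma> = insert y A"
    using fin xy(1) by (auto simp: A_def \<sigma>)
  have J: "join W (insert y S) = join W S" if "x \<in> S" for S
    using join_insert_absorb[OF that] xy(2) by blast
  define T1 where "T1 z = (if join W \<tau> = join W (insert z \<tau>)
      then csign r (insert z \<tau>) z * (csign r (insert z \<tau>) y * c (insert z \<sigma>)) else 0)" for z
  define T2 where "T2 z = (if join W \<sigma> = join W (insert z \<sigma>)
      then csign r (insert z \<sigma>) z * c (insert z \<sigma>) else 0)" for z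
  have d_h: "cdiff W C r (cone_homotopy x y r c) \<tau> = (\<Sum>z\<in>A. T1 z)"
    unfolding cdiff_def A_def
  proof (rule sum.cong[OF refl])
    fix z assume "z \<in> C - \<tau>"
    then have "insert z \<tau> - {y} = insert z \<sigma>" by (auto simp: \<sigma>)
    then show "(if join W \<tau> = join W (insert z \<tau>)
        then csign r (insert z \<tau>) z * cone_homotopy x y r c (insert z \<tau>) else 0) = T1 z"
      using \<tau> by (simp add: cone_homotopy_def T1_def)
  qed
  have h_d: "cone_homotopy x y r (cdiff W C r c) \<tau> = csign r \<tau> y * (csign r \<tau> y * c \<tau> + (\<Sum>z\<in>A. T2 z))"
  proof -
    have "cdiff W C r c \<sigma> = T2 y + (\<Sum>z\<in>A. T2 z)"
      unfolding cdiff_def A(3) T2_def using A(1,2) by simp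
    also have "T2 y = csign r \<tau> y * c \<tau>" using J[OF \<sigma>(3)] by (simp add: T2_def \<sigma>(1))
    finally show ?thesis using \<tau> by (simp add: cone_homotopy_def \<sigma>_def)
  qed
  have cancel: "T1 z + csign r \<tau> y * T2 z = 0" if "z \<in> A" for z
  proof -
    have z: "z \<notin> \<sigma>" "z \<noteq> y" "z \<in> C" using that by (auto simp: A_def \<sigma>)
    have "join W (insert z \<tau>) = join W (insert z \<sigma>)"
      using J[of "insert z \<sigma>"] \<sigma>(1,3) by (simp add: insert_commute)
    moreover have "join W \<tau> = join W \<sigma>" using J[OF \<sigma>(3)] \<sigma>(1) by simp
    ultimately show ?thesis
      using csign_insert_twice_cancel[OF \<sigma>(4) total xy(1) z(3) z(2)[symmetric] \<sigma>(2) z(1)]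
      unfolding T1_def T2_def \<sigma>(1) by (simp add: algebra_simps)
  qed
  have "cdiff W C r (cone_homotopy x y r c) \<tau> + cone_homotopy x y r (cdiff W C r c) \<tau>
      = (csign r \<tau> y * csign r \<tau> y) * c \<tau> + (\<Sum>z\<in>A. T1 z + csign r \<tau> y * T2 z)"
    unfolding d_h h_d by (simp add: sum.distrib sum_distrib_left sum_distrib_right algebra_simps)
  also have "\<dots> = c \<tau>" using cancel by (simp add: csign_square)
  finally show ?thesis .
qed

lemma cone_homotopy_formula:
  assumes fin: "finite C" and total: "total_on C r" "antisym r"
    and xy: "y \<in> C" "x \<subset> y" and supp: "\<And>\<sigma>. c \<sigma> \<noteq> 0 \<Longrightarrow> \<sigma> \<subseteq> C" and "x \<in> \<tau>"
  shows "cdiff W C r (cone_homotopy x y r c) \<tau> + cone_homotopy x y r (cdiff W C r c) \<tau> = c \<tau>"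
proof (cases "\<tau> \<subseteq> C")
  case True
  show ?thesis
  proof (cases "y \<in> \<tau>")
    case True
    show ?thesis
      by (rule homotopy_formula_apex_in[OF fin total xy finite_subset[OF \<open>\<tau> \<subseteq> C\<close> fin]
            \<open>x \<in> \<tau>\<close> \<open>y \<in> \<tau>\<close>])
  next
    case False
    then have "cone_homotopy x y r (cdiff W C r c) \<tau> = 0" by (simp add: cone_homotopy_def)
    with False show ?thesis
      using homotopy_formula_apex_notin[OF fin xy(1) \<open>x \<in> \<tau>\<close>] xy(2) by simp
  qed
next
  case False
  have "\<not> \<tau> - {y} \<subseteq> C" using False xy(1) by blast
  then have "cdiff W C r c (\<tau> - {y}) = 0" using cdiff_eq_0_outside[where c = c, OF supp] by simp
  moreover have "cdiff W C r (cone_homotopy x y r c) \<tau> = 0"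
    by (rule cdiff_eq_0_outside[OF cone_homotopy_support[OF xy(1) supp] False])
  moreover have "c \<tau> = 0" using supp False by blast
  ultimately show ?thesis by (simp add: cone_homotopy_def)
qed

definition cone_retraction :: "'n::finite subspace \<Rightarrow> 'n subspace set \<Rightarrow> ('n subspace \<times> 'n subspace) set
    \<Rightarrow> 'n subspace \<Rightarrow> 'n subspace \<Rightarrow> ('n subspace set \<Rightarrow> rat) \<Rightarrow> ('n subspace set \<Rightarrow> rat)" where
  "cone_retraction W C r x y c = (\<lambda>\<tau>. c \<tau> - cdiff W C r (cone_homotopy x y r c) \<tau>
      - cone_homotopy x y r (cdiff W C r c) \<tau>)"

lemma cochain_cone_retraction:
  assumes fin: "finite C" and total: "total_on C r" "antisym r"
    and xy: "y \<in> C" "x \<subset> y" and c: "cochain W C k c"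
  shows "cochain W (C - {x}) k (cone_retraction W C r x y c)"
  unfolding cochain_def
proof (intro allI impI)
  fix \<tau> assume nz: "cone_retraction W C r x y c \<tau> \<noteq> 0"
  have supp: "\<And>\<sigma>. c \<sigma> \<noteq> 0 \<Longrightarrow> \<sigma> \<subseteq> C" by (rule cochain_support[OF c])
  have "x \<notin> \<tau>"
  proof
    assume "x \<in> \<tau>"
    with nz show False
      using cone_homotopy_formula[where c = c and W = W, OF fin total xy supp \<open>x \<in> \<tau>\<close>]
      by (simp add: cone_retraction_def algebra_simps)
  qed
  moreover have "cochain W C k (cone_retraction W C r x y c)"
  proof -
    have "cochain W C (k - 1 + 1) (cdiff W C r (cone_homotopy x y r c))"
      by (rule cochain_cdiff[OF fin cochain_cone_homotopy[OF fin xy c]])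
    moreover have "cochain W C (k + 1 - 1) (cone_homotopy x y r (cdiff W C r c))"
      by (rule cochain_cone_homotopy[OF fin xy cochain_cdiff[OF fin c]])
    ultimately show ?thesis
      using c unfolding cochain_def cone_retraction_def by force
  qed
  ultimately show "\<tau> \<subseteq> C - {x} \<and> cdeg W \<tau> = k"
    using nz unfolding cochain_def by blast
qed

lemma cdiff_cone_retraction:
  assumes fin: "finite C" and total: "total_on C r" "antisym r"
    and y: "y \<in> C" and supp: "\<And>\<sigma>. c \<sigma> \<noteq> 0 \<Longrightarrow> \<sigma> \<subseteq> C"
  shows "cdiff W C r (cone_retraction W C r x y c) = cone_retraction W C r x y (cdiff W C r c)"
proof -
  have "cdiff W C r (cdiff W C r (cone_homotopy x y r c)) = (\<lambda>_. 0)"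
    using cdiff_cdiff[OF fin total] cone_homotopy_support[OF y supp] by blast
  moreover have "cdiff W C r (cdiff W C r c) = (\<lambda>_. 0)"
    by (rule cdiff_cdiff[OF fin total supp])
  ultimately show ?thesis
    unfolding cone_retraction_def cdiff_diff by simp
qed

lemma incl_quasi_iso_remove_dominated:
  assumes fin: "finite C" and total: "total_on C r" "antisym r" and xy: "y \<in> C" "x \<subset> y"
  shows "incl_quasi_iso W (C - {x}) C r"
  unfolding incl_quasi_iso_def
proof (intro conjI allI impI)
  fix k c
  assume "cochain W (C - {x}) k c \<and> cdiff W C r c = (\<lambda>_. 0)
    \<and> (\<exists>b. cochain W C (k - 1) b \<and> cdiff W C r b = c)"
  then obtain b where c: "cochain W (C - {x}) k c" and dc: "cdiff W C r c = (\<lambda>_. 0)"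
    and b: "cochain W C (k - 1) b" and db: "cdiff W C r b = c"
    by blast
  have "cone_homotopy x y r c = (\<lambda>_. 0)"
    using cochain_support[OF c] xy(2) by (intro cone_homotopy_eq_0) auto
  have "cdiff W C r (cone_retraction W C r x y b) = cone_retraction W C r x y (cdiff W C r b)"
    by (rule cdiff_cone_retraction[where c = b, OF fin total xy(1) cochain_support[OF b]])
  also have "\<dots> = c"
    using db dc \<open>cone_homotopy x y r c = (\<lambda>_. 0)\<close> by (simp add: cone_retraction_def)
  finally have "cdiff W C r (cone_retraction W C r x y b) = c" .
  moreover have "cochain W (C - {x}) (k - 1) (cone_retraction W C r x y b)"
    by (rule cochain_cone_retraction[OF fin total xy b])
  ultimately show "\<exists>b. cochain W (C - {x}) (k - 1) b \<and> cdiff W C r b = c" by blast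
next
  fix k c
  assume "cochain W C k c \<and> cdiff W C r c = (\<lambda>_. 0)"
  then have c: "cochain W C k c" and dc: "cdiff W C r c = (\<lambda>_. 0)" by blast+
  have "cdiff W C r (cone_retraction W C r x y c) = cone_retraction W C r x y (cdiff W C r c)"
    by (rule cdiff_cone_retraction[where c = c, OF fin total xy(1) cochain_support[OF c]])
  also have "\<dots> = (\<lambda>_. 0)"
    using dc by (simp add: cone_retraction_def)
  finally have "cdiff W C r (cone_retraction W C r x y c) = (\<lambda>_. 0)" .
  moreover have "cochain W (C - {x}) k (cone_retraction W C r x y c)"
    by (rule cochain_cone_retraction[OF fin total xy c])
  moreover have "cochain W C (k - 1) (cone_homotopy x y r c)"
    by (rule cochain_cone_homotopy[OF fin xy c])
  moreover have "c = (\<lambda>\<sigma>. cone_retraction W C r x y c \<sigma> + cdiff W C r (cone_homotopy x y r c) \<sigma>)"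
    using dc by (simp add: cone_retraction_def)
  ultimately show "\<exists>c' b. cochain W (C - {x}) k c' \<and> cdiff W C r c' = (\<lambda>_. 0)
      \<and> cochain W C (k - 1) b \<and> c = (\<lambda>\<sigma>. c' \<sigma> + cdiff W C r b \<sigma>)"
    by blast
qed

lemma incl_quasi_iso_refl: "incl_quasi_iso W C C r"
  unfolding incl_quasi_iso_def
proof (intro conjI allI impI)
  fix k c
  assume "cochain W C k c \<and> cdiff W C r c = (\<lambda>_. 0)"
  moreover have "cochain W C (k - 1) (\<lambda>_. 0)" by (simp add: cochain_def)
  ultimately show "\<exists>c' b. cochain W C k c' \<and> cdiff W C r c' = (\<lambda>_. 0)
      \<and> cochain W C (k - 1) b \<and> c = (\<lambda>\<sigma>. c' \<sigma> + cdiff W C r b \<sigma>)"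
    by (intro exI[of _ c] exI[of _ "\<lambda>_. 0"]) simp
qed blast

lemma incl_quasi_iso_trans:
  assumes fin: "finite C3" and sub: "C1 \<subseteq> C2" "C2 \<subseteq> C3"
    and qi12: "incl_quasi_iso W C1 C2 r" and qi23: "incl_quasi_iso W C2 C3 r"
  shows "incl_quasi_iso W C1 C3 r"
proof -
  have d23: "cdiff W C3 r c = cdiff W C2 r c" if "cochain W C2 k c" for k c
    using cdiff_superset[OF fin sub(2) cochain_support[OF that]] .
  show ?thesis
    unfolding incl_quasi_iso_def
  proof (intro conjI allI impI)
    fix k c
    assume "cochain W C1 k c \<and> cdiff W C3 r c = (\<lambda>_. 0)
      \<and> (\<exists>b. cochain W C3 (k - 1) b \<and> cdiff W C3 r b = c)"
    then have c: "cochain W C1 k c" "cochain W C2 k c" and dc: "cdiff W C3 r c = (\<lambda>_. 0)"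
      and "\<exists>b. cochain W C3 (k - 1) b \<and> cdiff W C3 r b = c"
      using cochain_mono[OF sub(1)] by blast+
    with qi23 obtain b2 where b2: "cochain W C2 (k - 1) b2" "cdiff W C3 r b2 = c"
      unfolding incl_quasi_iso_def by blast
    with qi12 c dc obtain b1 where "cochain W C1 (k - 1) b1" "cdiff W C2 r b1 = c"
      unfolding incl_quasi_iso_def d23[OF c(2)] d23[OF b2(1)] by blast
    then show "\<exists>b. cochain W C1 (k - 1) b \<and> cdiff W C3 r b = c"
      using d23 cochain_mono[OF sub(1)] by metis
  next
    fix k c
    assume "cochain W C3 k c \<and> cdiff W C3 r c = (\<lambda>_. 0)"
    with qi23 obtain c2 b3 where c2: "cochain W C2 k c2" "cdiff W C3 r c2 = (\<lambda>_. 0)"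
      and b3: "cochain W C3 (k - 1) b3" and c: "c = (\<lambda>\<sigma>. c2 \<sigma> + cdiff W C3 r b3 \<sigma>)"
      unfolding incl_quasi_iso_def by blast
    with qi12 obtain c1 b2 where c1: "cochain W C1 k c1" "cdiff W C2 r c1 = (\<lambda>_. 0)"
      and b2: "cochain W C2 (k - 1) b2" and c2_eq: "c2 = (\<lambda>\<sigma>. c1 \<sigma> + cdiff W C2 r b2 \<sigma>)"
      unfolding incl_quasi_iso_def d23[OF c2(1)] by blast
    have "cdiff W C3 r c1 = (\<lambda>_. 0)"
      using c1 d23 cochain_mono[OF sub(1)] by metis
    moreover have "cochain W C3 (k - 1) (\<lambda>\<sigma>. b2 \<sigma> + b3 \<sigma>)"
      using cochain_add[OF cochain_mono[OF sub(2) b2] b3] .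
    moreover have "c = (\<lambda>\<sigma>. c1 \<sigma> + cdiff W C3 r (\<lambda>\<sigma>. b2 \<sigma> + b3 \<sigma>) \<sigma>)"
      unfolding cdiff_add c c2_eq d23[OF b2] by (simp add: add.assoc)
    ultimately show "\<exists>c' b. cochain W C1 k c' \<and> cdiff W C3 r c' = (\<lambda>_. 0)
        \<and> cochain W C3 (k - 1) b \<and> c = (\<lambda>\<sigma>. c' \<sigma> + cdiff W C3 r b \<sigma>)"
      using c1(1) by blast
  qed
qed

lemma incl_quasi_iso_of_dominated:
  assumes "finite C" "total_on C r" "antisym r" "C' \<subseteq> C" "\<forall>x\<in>C - C'. \<exists>y\<in>C'. x \<subset> y"
  shows "incl_quasi_iso W C' C r"
  using assms
proof (induction "card (C - C')" arbitrary: C)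
  case 0
  then have "C = C'" by auto
  then show ?case by (simp add: incl_quasi_iso_refl)
next
  case (Suc n)
  then have "C - C' \<noteq> {}" by (metis card.empty nat.distinct(1))
  then obtain x where x: "x \<in> C - C'" by blast
  with Suc.prems obtain y where y: "y \<in> C'" "x \<subset> y" by blast
  have IH: "incl_quasi_iso W C' (C - {x}) r"
  proof (rule Suc.hyps)
    show "n = card (C - {x} - C')"
      using Suc.hyps(2) x by (simp add: Diff_insert2[symmetric] insert_Diff_single)
    show "total_on (C - {x}) r" using total_on_subset[OF Suc.prems(2)] by blast
  qed (use Suc.prems x in auto)
  have "y \<in> C" using y Suc.prems(4) by blast
  then have "incl_quasi_iso W (C - {x}) C r"
    by (rule incl_quasi_iso_remove_dominated[OF Suc.prems(1-3) _ y(2)])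
  moreover have "C' \<subseteq> C - {x}" using Suc.prems(4) x by blast
  ultimately show ?case
    using incl_quasi_iso_trans[OF Suc.prems(1) _ Diff_subset IH] by blast
qed

lemma finite_nonmaximal_less_maximal:
  fixes x :: "'a::order"
  assumes "finite A" "x \<in> A" "\<exists>w\<in>A. x < w"
  shows "\<exists>m\<in>A. x < m \<and> \<not> (\<exists>w\<in>A. m < w)"
proof -
  obtain w where w: "w \<in> A" "x < w" using assms(3) by blast
  then obtain m where m: "m \<in> A" "w \<le> m" "\<forall>b\<in>A. m \<le> b \<longrightarrow> m = b"
    using finite_has_maximal2[OF assms(1)] by blast
  then have "\<not> (\<exists>w\<in>A. m < w)" by (auto simp: less_le)
  with m w show ?thesis by (meson less_le_trans)
qed

theorem corollary2p2:
  fixes A :: "(complex ^ ('n::finite)) set set" and x0 :: "(complex ^ ('n::finite)) set"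
    and r :: "((complex ^ ('n::finite)) set \<times> (complex ^ ('n::finite)) set) set"
  assumes "subspace_arrangement A"
    and "x0 \<in> A"
    and "linear_order_on ((\<lambda>y. x0 \<inter> y) ` (A - {x0})) r"
  shows "incl_quasi_iso x0
           {z \<in> (\<lambda>y. x0 \<inter> y) ` (A - {x0}). \<not> (\<exists>w \<in> (\<lambda>y. x0 \<inter> y) ` (A - {x0}). z \<subset> w)}
           ((\<lambda>y. x0 \<inter> y) ` (A - {x0})) r"
proof (rule incl_quasi_iso_of_dominated)
  let ?C = "(\<lambda>y. x0 \<inter> y) ` (A - {x0})"
  let ?M = "{z \<in> ?C. \<not> (\<exists>w \<in> ?C. z \<subset> w)}"
  show fin: "finite ?C"
    using assms(1) unfolding subspace_arrangement_def by simp
  show "total_on ?C r" "antisym r"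
    using assms(3) unfolding linear_order_on_def partial_order_on_def by blast+
  show "\<forall>x\<in>?C - ?M. \<exists>y\<in>?M. x \<subset> y"
  proof
    fix x assume "x \<in> ?C - ?M"
    then have "x \<in> ?C" "\<exists>w\<in>?C. x \<subset> w" by auto
    from finite_nonmaximal_less_maximal[OF fin this] show "\<exists>y\<in>?M. x \<subset> y" by auto
  qed
qed blast

end
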